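(* Let $N\ge 2$ and $m$ be integers, let $v=e^{\pi i/N}$, and for integers $n$ put $\{n\}=v^n-v^{-n}$, $A(j,k)=\{j-k\}\{j+k\}$, $S(k,l)=\prod_{k\le n\le l}\{n\}$ and $S'(k,l)=\prod_{k\le n\le l,\ n\notin\{0,N\}}\{n\}$. For a finite family $(a_i)_{i\in I}$ put ${\prod'_{i\in I}}a_i=\sum_{i\in I}\prod_{r\in I\setminus\{i\}}a_r$. For integers $0\le j\le N-1$, $0\le l\le N-1$ define $$D(j,l)=(v^j+v^{-j})\Big(\prod_{k=1}^lA(j,k)+2\{j\}^2{\prod_{1\le k\le l}}'A(j,k)\Big)+\frac{mj}{2}\{j\}\prod_{k=1}^lA(j,k).$$ Then $D(j,l)=D_1(j,l)+D_2(j,l)$, where $D_1(j,l)=\Big(\frac{mj}{2}+\frac{v^j+v^{-j}}{\{j\}}+2\{2j\}\sum_{k=1}^l\frac{1}{A(j,k)}\Big)S(j-l,j+l)$ if $l<\min(j,N-j)$, and $D_1(j,l)=0$ if $l\ge\min(j,N-j)$; and $D_2(j,l)=2S'(j-l,j+l)$ if $j\le l<N-j$, $D_2(j,l)=-2S'(j-l,j+l)$ if $N-j\le l<j$, and $D_2(j,l)=0$ if $l<\min(j,N-j)$ or $l\ge\max(j,N-j)$. *)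

theory Defs
  imports Complex_Main
begin

definition vv :: "int \<Rightarrow> complex" where
  "vv N = exp (complex_of_real pi * \<i> / of_int N)"

definition br :: "int \<Rightarrow> int \<Rightarrow> complex" where
  "br N n = vv N powi n - vv N powi (- n)"

definition AA :: "int \<Rightarrow> int \<Rightarrow> int \<Rightarrow> complex" where
  "AA N j k = br N (j - k) * br N (j + k)"

definition SS :: "int \<Rightarrow> int \<Rightarrow> int \<Rightarrow> complex" where
  "SS N k l = (\<Prod>n\<in>{k..l}. br N n)"

definition SS' :: "int \<Rightarrow> int \<Rightarrow> int \<Rightarrow> complex" where
  "SS' N k l = (\<Prod>n\<in>{n\<in>{k..l}. n \<noteq> 0 \<and> n \<noteq> N}. br N n)"

definition prodp :: "('i \<Rightarrow> complex) \<Rightarrow> 'i set \<Rightarrow> complex" where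
  "prodp a I = (\<Sum>i\<in>I. \<Prod>r\<in>I - {i}. a r)"

definition DD :: "int \<Rightarrow> int \<Rightarrow> int \<Rightarrow> int \<Rightarrow> complex" where
  "DD N m j l =
     (vv N powi j + vv N powi (- j)) *
       ((\<Prod>k\<in>{1..l}. AA N j k) + 2 * (br N j)\<^sup>2 * prodp (AA N j) {1..l})
     + of_int m * of_int j / 2 * br N j * (\<Prod>k\<in>{1..l}. AA N j k)"

definition DD1 :: "int \<Rightarrow> int \<Rightarrow> int \<Rightarrow> int \<Rightarrow> complex" where
  "DD1 N m j l =
     (if l < min j (N - j) then
        (of_int m * of_int j / 2 + (vv N powi j + vv N powi (- j)) / br N j
          + 2 * br N (2 * j) * (\<Sum>k\<in>{1..l}. 1 / AA N j k)) * SS N (j - l) (j + l)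
      else 0)"

definition DD2 :: "int \<Rightarrow> int \<Rightarrow> int \<Rightarrow> complex" where
  "DD2 N j l =
     (if j \<le> l \<and> l < N - j then 2 * SS' N (j - l) (j + l)
      else if N - j \<le> l \<and> l < j then - 2 * SS' N (j - l) (j + l)
      else 0)"

end

theory Submission
  imports Defs
begin

text \<open>
  Since \<open>{n} = 2i sin(n\<pi>/N)\<close>, the only vanishing brackets \<open>{j \<pm> k}\<close> with \<open>1 \<le> k \<le> l\<close>
  come from \<open>k = j\<close> and \<open>k = N - j\<close>. If neither index lies in \<open>[1, l]\<close>, then
  \<open>\<Prod>' A = (\<Prod> A) \<Sum> 1/A\<close> and \<open>S(j-l, j+l) = {j} \<Prod> A\<close>, and \<open>D = D\<^sub>1\<close> follows from
  \<open>{2j} = (v\<^sup>j + v\<^sup>-\<^sup>j) {j}\<close>. If exactly one does, \<open>\<Prod> A = 0\<close> and \<open>\<Prod>' A\<close> is the product of the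
  remaining factors, which is \<open>S'(j-l, j+l)\<close> up to the factor \<open>{2j}\<close> (for \<open>k = j\<close>) or
  \<open>{2j - N} = -{2j}\<close> (for \<open>k = N - j\<close>). If both do, \<open>D = 0\<close>: either the remaining product
  still has a zero factor or \<open>2j = N\<close> and \<open>v\<^sup>j + v\<^sup>-\<^sup>j = 0\<close>.
\<close>

lemma vv_powi: "vv N powi n = cis (of_int n * pi / of_int N)"
proof -
  have "vv N = cis (pi / of_int N)" unfolding vv_def cis_conv_exp by (simp add: mult.commute)
  then show ?thesis by (simp add: cis_power_int)
qed

lemma br_eq_sin: "br N n = 2 * \<i> * complex_of_real (sin (of_int n * pi / of_int N))"
  unfolding br_def vv_powi by (simp add: complex_eq_iff)

lemma vv_powi_add_powi_minus:
  "vv N powi n + vv N powi (- n) = 2 * complex_of_real (cos (of_int n * pi / of_int N))"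
  unfolding vv_powi by (simp add: complex_eq_iff)

lemma br_zero [simp]: "br N 0 = 0"
  by (simp add: br_def)

lemma br_double: "br N (2 * n) = (vv N powi n + vv N powi (- n)) * br N n"
  unfolding br_eq_sin vv_powi_add_powi_minus
  using sin_double[of "of_int n * pi / of_int N"] by (simp add: algebra_simps)

lemma br_diff_self:
  assumes "N \<noteq> 0"
  shows "br N (n - N) = - br N n"
proof -
  have "of_int (n - N) * pi / of_int N = of_int n * pi / of_int N - pi"
    using assms by (simp add: field_simps)
  then show ?thesis unfolding br_eq_sin by (simp add: sin_diff)
qed

lemma br_self: "N \<noteq> 0 \<Longrightarrow> br N N = 0"
  using br_diff_self[of N N] by simp

lemma br_nonzero:
  assumes "n \<noteq> 0" and "\<bar>n\<bar> < N"
  shows "br N n \<noteq> 0"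
proof
  assume "br N n = 0"
  then have "sin (of_int n * pi / of_int N) = 0" unfolding br_eq_sin by simp
  then obtain i :: int where "of_int n * pi / of_int N = of_int i * pi"
    by (metis sin_zero_iff_int2)
  with assms have "real_of_int n = of_int i * of_int N" by (simp add: field_simps)
  then have "n = i * N" by (metis of_int_eq_iff of_int_mult)
  moreover have "\<bar>N\<bar> \<le> \<bar>i * N\<bar>" if "i \<noteq> 0"
    using that by (simp add: abs_mult mult_le_cancel_right1 int_one_le_iff_zero_less)
  ultimately show False using assms by (cases "i = 0") auto
qed

definition br' :: "int \<Rightarrow> int \<Rightarrow> complex" where
  "br' N n = (if n \<noteq> 0 \<and> n \<noteq> N then br N n else 1)"

lemma SS'_eq_prod_br': "SS' N k l = (\<Prod>n\<in>{k..l}. br' N n)"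
  unfolding SS'_def br'_def by (rule prod.inter_filter) simp

lemma prod_atLeastAtMost_symmetric:
  fixes f :: "int \<Rightarrow> 'a :: comm_monoid_mult"
  assumes "0 \<le> l"
  shows "prod f {c - l..c + l} = f c * (\<Prod>k\<in>{1..l}. f (c - k) * f (c + k))"
  using assms
proof (induction l rule: int_ge_induct)
  case base
  then show ?case by simp
next
  case (step l)
  have "{c - (l + 1)..c + (l + 1)} = insert (c - (l + 1)) (insert (c + (l + 1)) {c - l..c + l})"
    and "{1..l + 1} = insert (l + 1) {1..l}"
    using step.hyps by auto
  then show ?case
    using step by (simp add: ac_simps)
qed

lemma prodp_eq_prod_mult_sum_inverse:
  assumes "finite I" and "\<And>i. i \<in> I \<Longrightarrow> a i \<noteq> 0"
  shows "prodp a I = prod a I * (\<Sum>i\<in>I. 1 / a i)"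
  unfolding prodp_def sum_distrib_left
proof (rule sum.cong [OF refl])
  fix i assume "i \<in> I"
  with assms show "prod a (I - {i}) = prod a I * (1 / a i)"
    by (simp add: prod.remove)
qed

lemma prodp_eq_prod_Diff:
  assumes "finite I" and "i0 \<in> I" and "a i0 = 0"
  shows "prodp a I = prod a (I - {i0})"
proof -
  have "(\<Sum>i\<in>I - {i0}. prod a (I - {i})) = 0"
    using assms by (intro sum.neutral ballI prod_zero) auto
  then show ?thesis
    unfolding prodp_def using assms by (simp add: sum.remove)
qed

lemma SS_symmetric:
  "0 \<le> l \<Longrightarrow> SS N (j - l) (j + l) = br N j * (\<Prod>k\<in>{1..l}. AA N j k)"
  unfolding SS_def AA_def by (rule prod_atLeastAtMost_symmetric)

lemma SS'_symmetric_remove: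
  assumes "k0 \<in> {1..l}"
    and "\<And>k. k \<in> {1..l} - {k0} \<Longrightarrow> j - k \<notin> {0, N} \<and> j + k \<notin> {0, N}"
  shows "SS' N (j - l) (j + l)
    = br' N j * (br' N (j - k0) * br' N (j + k0)) * (\<Prod>k\<in>{1..l} - {k0}. AA N j k)"
proof -
  have "SS' N (j - l) (j + l) = br' N j * (\<Prod>k\<in>{1..l}. br' N (j - k) * br' N (j + k))"
    unfolding SS'_eq_prod_br' using assms(1) by (intro prod_atLeastAtMost_symmetric) simp
  also have "(\<Prod>k\<in>{1..l}. br' N (j - k) * br' N (j + k))
      = br' N (j - k0) * br' N (j + k0) * (\<Prod>k\<in>{1..l} - {k0}. br' N (j - k) * br' N (j + k))"
    using assms(1) by (simp add: prod.remove)
  also have "(\<Prod>k\<in>{1..l} - {k0}. br' N (j - k) * br' N (j + k)) = (\<Prod>k\<in>{1..l} - {k0}. AA N j k)"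
    using assms(2) by (intro prod.cong) (auto simp: br'_def AA_def)
  finally show ?thesis by (simp add: ac_simps)
qed

lemma DD_eq_if_AA_vanishes:
  assumes "k0 \<in> {1..l}" and "AA N j k0 = 0"
  shows "DD N m j l
    = 2 * (vv N powi j + vv N powi (- j)) * (br N j)\<^sup>2 * (\<Prod>k\<in>{1..l} - {k0}. AA N j k)"
proof -
  have "(\<Prod>k\<in>{1..l}. AA N j k) = 0"
    using assms by (intro prod_zero) auto
  moreover have "prodp (AA N j) {1..l} = (\<Prod>k\<in>{1..l} - {k0}. AA N j k)"
    using assms by (intro prodp_eq_prod_Diff) auto
  ultimately show ?thesis
    unfolding DD_def by (simp only:) (simp add: algebra_simps)
qed

lemma DD_eq_DD1_if_l_below_min:
  assumes "0 \<le> l" and "l < min j (N - j)"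
  shows "DD N m j l = DD1 N m j l"
proof -
  define c where "c = vv N powi j + vv N powi (- j)"
  define P where "P = (\<Prod>k\<in>{1..l}. AA N j k)"
  define T where "T = (\<Sum>k\<in>{1..l}. 1 / AA N j k)"
  have "br N j \<noteq> 0"
    using assms by (intro br_nonzero) auto
  moreover have "AA N j k \<noteq> 0" if "k \<in> {1..l}" for k
    using that assms br_nonzero [of "j - k" N] br_nonzero [of "j + k" N] by (auto simp: AA_def)
  then have "prodp (AA N j) {1..l} = P * T"
    unfolding P_def T_def by (intro prodp_eq_prod_mult_sum_inverse) auto
  moreover have "SS N (j - l) (j + l) = br N j * P"
    unfolding P_def using assms(1) by (rule SS_symmetric)
  moreover have "br N (2 * j) = c * br N j"
    unfolding c_def by (rule br_double)
  ultimately show ?thesis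
    using assms(2) unfolding DD_def DD1_def
    by (simp add: c_def [symmetric] P_def [symmetric] T_def [symmetric] field_simps power2_eq_square)
qed

lemma DD_at_zero:
  assumes "0 \<le> l" and "l < N"
  shows "DD N m 0 l = 2 * SS' N (- l) l"
proof -
  have "SS' N (0 - l) (0 + l) = br' N 0 * (\<Prod>k\<in>{1..l}. br' N (0 - k) * br' N (0 + k))"
    unfolding SS'_eq_prod_br' using assms(1) by (rule prod_atLeastAtMost_symmetric)
  also have "\<dots> = (\<Prod>k\<in>{1..l}. AA N 0 k)"
    using assms by (auto simp: br'_def AA_def intro!: prod.cong)
  finally show ?thesis
    by (simp add: DD_def)
qed

lemma DD_eq_SS'_if_j_le_l:
  assumes "1 \<le> j" and "j \<le> l" and "l < N - j"
  shows "DD N m j l = 2 * SS' N (j - l) (j + l)"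
proof -
  have "SS' N (j - l) (j + l)
      = br' N j * (br' N (j - j) * br' N (j + j)) * (\<Prod>k\<in>{1..l} - {j}. AA N j k)"
    using assms by (intro SS'_symmetric_remove) auto
  moreover have "br' N j = br N j" "br' N (j - j) = 1" "br' N (j + j) = br N (2 * j)"
    using assms by (simp_all add: br'_def)
  moreover have "DD N m j l = 2 * (vv N powi j + vv N powi (- j)) * (br N j)\<^sup>2 * (\<Prod>k\<in>{1..l} - {j}. AA N j k)"
    using assms by (intro DD_eq_if_AA_vanishes) (auto simp: AA_def)
  ultimately show ?thesis
    by (simp add: br_double power2_eq_square)
qed

lemma DD_eq_neg_SS'_if_N_minus_j_le_l:
  assumes "N - j \<le> l" and "l < j" and "j < N"
  shows "DD N m j l = - 2 * SS' N (j - l) (j + l)"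
proof -
  have "SS' N (j - l) (j + l)
      = br' N j * (br' N (j - (N - j)) * br' N (j + (N - j))) * (\<Prod>k\<in>{1..l} - {N - j}. AA N j k)"
    using assms by (intro SS'_symmetric_remove) auto
  moreover have "br' N j = br N j" "br' N (j + (N - j)) = 1" "br' N (j - (N - j)) = br N (2 * j - N)"
    using assms by (auto simp: br'_def)
  moreover have "DD N m j l = 2 * (vv N powi j + vv N powi (- j)) * (br N j)\<^sup>2 * (\<Prod>k\<in>{1..l} - {N - j}. AA N j k)"
    using assms by (intro DD_eq_if_AA_vanishes) (auto simp: AA_def br_self)
  moreover have "br N (2 * j - N) = - ((vv N powi j + vv N powi (- j)) * br N j)"
    using assms by (simp add: br_diff_self br_double)
  ultimately show ?thesis
    by (simp add: power2_eq_square)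
qed

lemma DD_eq_zero_if_l_ge_max:
  assumes "j \<le> l" and "N - j \<le> l" and "1 \<le> j" and "j < N"
  shows "DD N m j l = 0"
proof -
  have DD_eq: "DD N m j l = 2 * (vv N powi j + vv N powi (- j)) * (br N j)\<^sup>2 * (\<Prod>k\<in>{1..l} - {j}. AA N j k)"
    using assms by (intro DD_eq_if_AA_vanishes) (auto simp: AA_def)
  show ?thesis
  proof (cases "2 * j = N")
    case True
    then have angle: "of_int j * pi / of_int N = pi / 2"
      using assms by (auto simp: field_simps)
    have "vv N powi j + vv N powi (- j) = 0"
      unfolding vv_powi_add_powi_minus angle by simp
    then show ?thesis
      unfolding DD_eq by simp
  next
    case False
    then have "(\<Prod>k\<in>{1..l} - {j}. AA N j k) = 0"
      using assms by (intro prod_zero bexI [of _ "N - j"]) (auto simp: AA_def br_self)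
    then show ?thesis
      unfolding DD_eq by simp
  qed
qed

theorem lemma2p3:
  fixes N m j l :: int
  assumes "N \<ge> 2"
    and "0 \<le> j" and "j \<le> N - 1"
    and "0 \<le> l" and "l \<le> N - 1"
  shows "DD N m j l = DD1 N m j l + DD2 N j l"
proof (cases "l < min j (N - j)")
  case True
  then show ?thesis
    using DD_eq_DD1_if_l_below_min [OF assms(4) True] by (simp add: DD2_def)
next
  case False
  then have "DD1 N m j l = 0"
    unfolding DD1_def by (rule if_not_P)
  moreover consider "j = 0" | "1 \<le> j" "j \<le> l" "l < N - j" | "N - j \<le> l" "l < j"
    | "1 \<le> j" "j \<le> l" "N - j \<le> l"
    using False assms by linarith
  then have "DD N m j l = DD2 N j l"
  proof cases
    case 1
    then show ?thesis using DD_at_zero [of l N m] assms by (simp add: DD2_def)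
  next
    case 2
    then show ?thesis using DD_eq_SS'_if_j_le_l [of j l N m] by (simp add: DD2_def)
  next
    case 3
    then show ?thesis using DD_eq_neg_SS'_if_N_minus_j_le_l [of N j l m] assms by (simp add: DD2_def)
  next
    case 4
    then show ?thesis using DD_eq_zero_if_l_ge_max [of j l N m] assms by (simp add: DD2_def)
  qed
  ultimately show ?thesis
    by simp
qed

end
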